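(* Let $p\in(0,1)$, let $G=(V,E)$ be an undirected graph with $n=|V|$, $m=|E|$, and let $k$ be a nonnegative integer. Then $G$ has a cut of size at least $k$ (a partition $V=S\cup T$ with at least $k$ edges between $S$ and $T$) if and only if the $\ell_p$ QRJA instance $\mathcal I(G)$ has a solution of loss at most $n w_2+2(m-k)+k\,2^p$. Moreover, from any solution of $\mathcal I(G)$ with loss at most this value one can construct a cut of $G$ of size at least $k$.
   Context: An $\ell_p$ QRJA instance consists of candidates, judgments $(a,b,y)$ ("$a$ is better than $b$ by $y$") with nonnegative weights, and a solution $\mathbf x$ assigns a real number $x_a$ to each candidate $a$; its loss is $\sum w\,|x_a-x_b-y|^p$ summed over the weighted judgments $(a,b,y)$ with weight $w$. Construction of $\mathcal I(G)$: let $w_2=\frac{2n}{1-p}+1$ and $w_1=nw_2+1$. The candidates are $V\cup\{v^{(s)},v^{(t)}\}$ (two new candidates). The judgments are: $(v^{(t)},v^{(s)},1)$ with weight $w_1$; $(v^{(s)},u,0)$ with weight $w_2$ for each $u\in V$; $(v^{(t)},u,0)$ with weight $w_2$ for each $u\in V$; and both $(u,v,1)$ and $(v,u,1)$ with weight $1$ for each edge $\{u,v\}\in E$. *)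

theory Defs
  imports Complex_Main
begin

definition simple_graph :: "'a set \<Rightarrow> 'a set set \<Rightarrow> bool" where
  "simple_graph V E \<longleftrightarrow> finite V \<and> (\<forall>e\<in>E. \<exists>u v. e = {u, v} \<and> u \<noteq> v \<and> u \<in> V \<and> v \<in> V)"

definition cut_edges :: "'a set \<Rightarrow> 'a set set \<Rightarrow> 'a set \<Rightarrow> 'a set set" where
  "cut_edges V E S = {e \<in> E. \<exists>u v. e = {u, v} \<and> u \<in> S \<and> v \<in> V - S}"

definition has_cut_at_least :: "'a set \<Rightarrow> 'a set set \<Rightarrow> nat \<Rightarrow> bool" where
  "has_cut_at_least V E k \<longleftrightarrow> (\<exists>S. S \<subseteq> V \<and> card (cut_edges V E S) \<ge> k)"

text \<open>Candidates of I(G): the vertices of G plus two new candidates v^(s), v^(t).\<close>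
datatype 'a cand = Vtx 'a | Src | Snk

definition w2 :: "real \<Rightarrow> nat \<Rightarrow> real" where
  "w2 p n = 2 * real n / (1 - p) + 1"

definition w1 :: "real \<Rightarrow> nat \<Rightarrow> real" where
  "w1 p n = real n * w2 p n + 1"

definition jloss :: "real \<Rightarrow> ('c \<Rightarrow> real) \<Rightarrow> 'c \<Rightarrow> 'c \<Rightarrow> real \<Rightarrow> real" where
  "jloss p x a b y = \<bar>x a - x b - y\<bar> powr p"

text \<open>Loss of solution x for the l_p QRJA instance I(G). The two judgments (u,v,1), (v,u,1)
  of an edge {u,v} correspond to the two ordered pairs (u,v), (v,u) with {u,v} in E.\<close>
definition qrja_loss :: "real \<Rightarrow> 'a set \<Rightarrow> 'a set set \<Rightarrow> ('a cand \<Rightarrow> real) \<Rightarrow> real" where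
  "qrja_loss p V E x =
     w1 p (card V) * jloss p x Snk Src 1
     + (\<Sum>u\<in>V. w2 p (card V) * jloss p x Src (Vtx u) 0)
     + (\<Sum>u\<in>V. w2 p (card V) * jloss p x Snk (Vtx u) 0)
     + (\<Sum>(u, v)\<in>{(u, v). u \<in> V \<and> v \<in> V \<and> u \<noteq> v \<and> {u, v} \<in> E}. 1 * jloss p x (Vtx u) (Vtx v) 1)"

definition loss_bound :: "real \<Rightarrow> 'a set \<Rightarrow> 'a set set \<Rightarrow> nat \<Rightarrow> real" where
  "loss_bound p V E k = real (card V) * w2 p (card V) + 2 * (real (card E) - real k) + real k * 2 powr p"

end

theory Submission
  imports Defs "HOL-Analysis.Convex"
begin

text \<open>Round a solution \<open>x\<close> to the cut \<open>S\<close> of vertices lying closer to \<open>x Src\<close> than to \<open>x Snk\<close>.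
  For \<open>0 < p < 1\<close> the map \<open>t \<mapsto> \<bar>t\<bar> powr p\<close> is subadditive with a quantitative gain,
  \<open>(a + b) powr p \<le> a powr p + b powr p - (1 - p) * min a b powr p\<close>. Hence each vertex \<open>u\<close> pays at
  least \<open>1 - \<bar>x Snk - x Src - 1\<bar> powr p\<close> plus a bonus \<open>(1 - p) * d u\<close>, where \<open>d u\<close> is its distance to
  the nearer anchor raised to \<open>p\<close>, and each edge pays at least \<open>2 powr p\<close> if cut by \<open>S\<close> and \<open>2\<close>
  otherwise, up to an error \<open>2 * (d u + d v)\<close>. The weight \<open>w2\<close> lets the bonuses absorb the errors
  and \<open>w1\<close> absorbs the deficit of the vertex terms, so every solution costs at least \<open>n * w2\<close> plus
  the edge cost of its rounded cut, which is exactly the loss of the \<open>0\<close>/\<open>1\<close> embedding of that cut.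
  Since \<open>2 powr p < 2\<close>, this cost bound is met exactly by the cuts of size at least \<open>k\<close>.\<close>

lemma one_plus_powr_le:
  fixes m p :: real assumes "0 \<le> m" "0 < p" "p < 1"
  shows "(1 + m) powr p \<le> 1 + p * m"
  using Youngs_inequality_0[of p "1 - p" "1 + m" 1] assms by (simp add: algebra_simps)

lemma le_powr_of_le_one:
  fixes x p :: real assumes "0 \<le> x" "x \<le> 1" "0 < p" "p \<le> 1"
  shows "x \<le> x powr p"
proof (cases "x = 0")
  case False
  then have "x powr 1 \<le> x powr p" using assms by (intro powr_mono') auto
  then show ?thesis using False assms by simp
qed simp

lemma add_powr_le_max_min:
  fixes a b p :: real assumes "0 \<le> a" "0 \<le> b" "0 < p" "p < 1"
  shows "(a + b) powr p \<le> max a b powr p + p * min a b powr p"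
proof -
  define m M where "m = min a b" and "M = max a b"
  have mM: "0 \<le> m" "m \<le> M" "a + b = M + m" using assms by (auto simp: m_def M_def)
  show ?thesis
  proof (cases "M = 0")
    case True then show ?thesis using mM assms by (simp add: m_def M_def)
  next
    case False
    then have M: "M > 0" using mM by simp
    define r where "r = m / M"
    have r: "0 \<le> r" "r \<le> 1" using mM M by (auto simp: r_def)
    have "a + b = M * (1 + r)" using M mM by (simp add: r_def field_simps)
    then have "(a + b) powr p = M powr p * (1 + r) powr p"
      using M r by (simp add: powr_mult)
    also have "\<dots> \<le> M powr p * (1 + p * r)"
      using one_plus_powr_le[OF r(1) assms(3,4)] by (intro mult_left_mono) auto
    also have "\<dots> = M powr p + p * (M powr p * r)" by (simp add: algebra_simps)
    also have "M powr p * r \<le> M powr p * r powr p"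
      using le_powr_of_le_one[OF r assms(3)] assms by (intro mult_left_mono) auto
    also have "M powr p * r powr p = m powr p"
      using M r mM by (simp add: r_def powr_divide)
    finally show ?thesis using assms by (simp add: mult_left_mono m_def M_def)
  qed
qed

lemma add_powr_le_sum_minus_min:
  fixes a b p :: real assumes "0 \<le> a" "0 \<le> b" "0 < p" "p < 1"
  shows "(a + b) powr p + (1 - p) * min a b powr p \<le> a powr p + b powr p"
proof -
  have "max a b powr p + min a b powr p = a powr p + b powr p" by (simp add: min_def max_def)
  then show ?thesis using add_powr_le_max_min[OF assms] by (simp add: algebra_simps)
qed

lemma abs_add_powr_le:
  fixes a b p :: real assumes "0 < p" "p < 1"
  shows "\<bar>a + b\<bar> powr p \<le> \<bar>a\<bar> powr p + \<bar>b\<bar> powr p"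
proof -
  have "\<bar>a + b\<bar> powr p \<le> (\<bar>a\<bar> + \<bar>b\<bar>) powr p" using assms by (intro powr_mono2) auto
  also have "\<dots> \<le> \<bar>a\<bar> powr p + \<bar>b\<bar> powr p"
  proof -
    have "0 \<le> (1 - p) * min \<bar>a\<bar> \<bar>b\<bar> powr p" using assms by simp
    then show ?thesis using add_powr_le_sum_minus_min[of "\<bar>a\<bar>" "\<bar>b\<bar>" p] assms by linarith
  qed
  finally show ?thesis .
qed

lemma one_le_abs_powr_add_abs_powr:
  fixes a p :: real assumes "0 < p" "p < 1"
  shows "1 \<le> \<bar>a\<bar> powr p + \<bar>a - 1\<bar> powr p"
  using abs_add_powr_le[OF assms, of a "1 - a"] by (simp add: abs_minus_commute)

lemma abs_powr_legs_ge:
  fixes s t y p :: real assumes "0 < p" "p < 1"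
  shows "1 - \<bar>t - s - 1\<bar> powr p + (1 - p) * min \<bar>y - s\<bar> \<bar>t - y\<bar> powr p
     \<le> \<bar>y - s\<bar> powr p + \<bar>t - y\<bar> powr p"
proof -
  have "1 \<le> \<bar>t - s\<bar> powr p + \<bar>t - s - 1\<bar> powr p"
    using one_le_abs_powr_add_abs_powr[OF assms] .
  moreover have "\<bar>t - s\<bar> powr p \<le> (\<bar>y - s\<bar> + \<bar>t - y\<bar>) powr p"
    using assms by (intro powr_mono2) auto
  moreover have "(\<bar>y - s\<bar> + \<bar>t - y\<bar>) powr p + (1 - p) * min \<bar>y - s\<bar> \<bar>t - y\<bar> powr p
      \<le> \<bar>y - s\<bar> powr p + \<bar>t - y\<bar> powr p"
    using assms by (intro add_powr_le_sum_minus_min) auto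
  ultimately show ?thesis by linarith
qed

definition arcs :: "'a set \<Rightarrow> 'a set set \<Rightarrow> ('a \<times> 'a) set" where
  "arcs V E = {(u, v). u \<in> V \<and> v \<in> V \<and> u \<noteq> v \<and> {u, v} \<in> E}"

lemma finite_arcs: "finite V \<Longrightarrow> finite (arcs V E)"
  by (rule finite_subset[of _ "V \<times> V"]) (auto simp: arcs_def)

lemma swap_in_arcs: "(u, v) \<in> arcs V E \<Longrightarrow> (v, u) \<in> arcs V E"
  by (auto simp: arcs_def insert_commute)

lemma simple_graph_finite_edges: "simple_graph V E \<Longrightarrow> finite E"
  unfolding simple_graph_def by (rule finite_subset[of _ "Pow V"]) auto

lemma sum_symmetrize:
  fixes F :: "'a \<Rightarrow> 'a \<Rightarrow> real"
  assumes "finite P" and "\<And>u v. (u, v) \<in> P \<Longrightarrow> (v, u) \<in> P"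
  shows "(\<Sum>(u, v)\<in>P. F u v) = (\<Sum>(u, v)\<in>P. (F u v + F v u) / 2)"
proof -
  have "(\<Sum>(u, v)\<in>P. F v u) = (\<Sum>(u, v)\<in>P. F u v)"
    by (rule sum.reindex_bij_witness[where i = prod.swap and j = prod.swap]) (auto intro: assms(2))
  then show ?thesis
    by (simp add: case_prod_unfold sum_divide_distrib[symmetric] sum.distrib)
qed

lemma sum_arcs_doubleton:
  assumes "simple_graph V E"
  shows "(\<Sum>(u, v)\<in>arcs V E. h {u, v}) = 2 * (\<Sum>e\<in>E. (h e :: real))"
proof -
  let ?edge = "\<lambda>(u, v). {u, v}"
  have "finite (arcs V E)" "finite E" "?edge ` arcs V E \<subseteq> E"
    using assms finite_arcs simple_graph_finite_edges by (auto simp: simple_graph_def arcs_def)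
  from sum.group[OF this, of "h \<circ> ?edge"]
  have "(\<Sum>(u, v)\<in>arcs V E. h {u, v}) = (\<Sum>e\<in>E. \<Sum>a\<in>{a \<in> arcs V E. ?edge a = e}. h (?edge a))"
    by (simp add: case_prod_unfold)
  also have "\<dots> = (\<Sum>e\<in>E. 2 * h e)"
  proof (rule sum.cong[OF refl])
    fix e assume "e \<in> E"
    then obtain a b where ab: "e = {a, b}" "a \<noteq> b" "a \<in> V" "b \<in> V"
      using assms unfolding simple_graph_def by blast
    then have "{c \<in> arcs V E. ?edge c = e} = {(a, b), (b, a)}"
      using \<open>e \<in> E\<close> by (auto simp: arcs_def doubleton_eq_iff insert_commute)
    then show "(\<Sum>c\<in>{c \<in> arcs V E. ?edge c = e}. h (?edge c)) = 2 * h e"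
      using ab by (simp add: insert_commute)
  qed
  finally show ?thesis by (simp add: sum_distrib_left)
qed

lemma sum_pairs_le_card_mult_sum:
  fixes d :: "'a \<Rightarrow> real"
  assumes "finite V" "P \<subseteq> V \<times> V" "\<And>u. u \<in> V \<Longrightarrow> 0 \<le> d u"
  shows "(\<Sum>(u, v)\<in>P. d u + d v) \<le> 2 * card V * (\<Sum>u\<in>V. d u)"
proof -
  have "(\<Sum>(u, v)\<in>P. d u + d v) \<le> (\<Sum>(u, v)\<in>V \<times> V. d u + d v)"
    using assms by (intro sum_mono2) auto
  also have "\<dots> = (\<Sum>u\<in>V. \<Sum>v\<in>V. d u + d v)"
    by (simp add: sum.cartesian_product)
  also have "\<dots> = 2 * card V * (\<Sum>u\<in>V. d u)"
    by (simp add: sum.distrib sum_distrib_left[symmetric] sum_distrib_right[symmetric] algebra_simps)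
  finally show ?thesis .
qed

lemma doubleton_in_cut_edges_iff:
  assumes "S \<subseteq> V" "u \<in> V" "v \<in> V" "{u, v} \<in> E"
  shows "{u, v} \<in> cut_edges V E S \<longleftrightarrow> (u \<in> S \<longleftrightarrow> v \<notin> S)"
  using assms unfolding cut_edges_def by (auto simp: doubleton_eq_iff)

text \<open>The loss the two judgments of an edge incur when \<open>S\<close> is placed at \<open>0\<close> and \<open>V - S\<close> at \<open>1\<close>.\<close>
definition edge_cost :: "real \<Rightarrow> 'a set \<Rightarrow> 'a set set \<Rightarrow> 'a set \<Rightarrow> 'a set \<Rightarrow> real" where
  "edge_cost p V E S e = (if e \<in> cut_edges V E S then 2 powr p else 2)"

lemma sum_edge_cost:
  assumes "finite E"
  shows "(\<Sum>e\<in>E. edge_cost p V E S e)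
    = card (cut_edges V E S) * 2 powr p + 2 * (real (card E) - card (cut_edges V E S))"
proof -
  have sub: "cut_edges V E S \<subseteq> E" by (auto simp: cut_edges_def)
  then have "(\<Sum>e\<in>E. edge_cost p V E S e)
      = (\<Sum>e\<in>cut_edges V E S. 2 powr p) + (\<Sum>e\<in>E - cut_edges V E S. 2)"
    using sum.If_cases[OF assms, of "\<lambda>e. e \<in> cut_edges V E S" "\<lambda>_. 2 powr p" "\<lambda>_. 2"]
    by (simp add: edge_cost_def Int_absorb1 Diff_eq)
  then show ?thesis
    using sub assms by (simp add: card_Diff_subset finite_subset of_nat_diff card_mono)
qed

lemma sum_edge_cost_le_iff:
  fixes k :: nat
  assumes "finite E" "0 < p" "p < 1"
  shows "(\<Sum>e\<in>E. edge_cost p V E S e) \<le> 2 * (real (card E) - k) + k * 2 powr p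
    \<longleftrightarrow> k \<le> card (cut_edges V E S)"
proof -
  define c where "c = real (card (cut_edges V E S))"
  have "(\<Sum>e\<in>E. edge_cost p V E S e) - (2 * (real (card E) - k) + k * 2 powr p)
      = (k - c) * (2 - 2 powr p)"
    by (simp add: sum_edge_cost[OF assms(1)] c_def algebra_simps)
  then have "(\<Sum>e\<in>E. edge_cost p V E S e) \<le> 2 * (real (card E) - k) + k * 2 powr p
      \<longleftrightarrow> (k - c) * (2 - 2 powr p) \<le> 0"
    by linarith
  also have "\<dots> \<longleftrightarrow> k \<le> c"
    using assms powr_less_mono[of p 1 2] by (simp add: mult_le_0_iff)
  finally show ?thesis by (simp add: c_def)
qed

lemma qrja_loss_arcs:
  "qrja_loss p V E x = w1 p (card V) * jloss p x Snk Src 1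
     + (\<Sum>u\<in>V. w2 p (card V) * (jloss p x Src (Vtx u) 0 + jloss p x Snk (Vtx u) 0))
     + (\<Sum>(u, v)\<in>arcs V E. jloss p x (Vtx u) (Vtx v) 1)"
  unfolding qrja_loss_def arcs_def by (simp add: sum.distrib distrib_left)

definition cut_solution :: "'a set \<Rightarrow> 'a cand \<Rightarrow> real" where
  "cut_solution S c = (case c of Vtx u \<Rightarrow> if u \<in> S then 0 else 1 | Src \<Rightarrow> 0 | Snk \<Rightarrow> 1)"

lemma qrja_loss_cut_solution:
  assumes "simple_graph V E" "S \<subseteq> V"
  shows "qrja_loss p V E (cut_solution S)
    = card V * w2 p (card V) + (\<Sum>e\<in>E. edge_cost p V E S e)"
proof -
  let ?x = "cut_solution S"
  let ?F = "\<lambda>u v. jloss p ?x (Vtx u) (Vtx v) 1"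
  have legs: "jloss p ?x Src (Vtx u) 0 + jloss p ?x Snk (Vtx u) 0 = 1" for u
    by (simp add: cut_solution_def jloss_def)
  have "(?F u v + ?F v u) / 2 = edge_cost p V E S {u, v} / 2" if "(u, v) \<in> arcs V E" for u v
    using that doubleton_in_cut_edges_iff[OF assms(2), of u v E]
    by (auto simp: arcs_def edge_cost_def cut_solution_def jloss_def)
  then have "(\<Sum>(u, v)\<in>arcs V E. ?F u v) = (\<Sum>(u, v)\<in>arcs V E. edge_cost p V E S {u, v}) / 2"
    using sum_symmetrize[OF finite_arcs swap_in_arcs, of V E ?F] assms(1)
    by (auto simp: simple_graph_def case_prod_unfold sum_divide_distrib intro!: sum.cong)
  then show ?thesis
    by (simp add: qrja_loss_arcs legs sum_arcs_doubleton[OF assms(1)])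
      (simp add: cut_solution_def jloss_def)
qed

definition nearer_source :: "'a set \<Rightarrow> ('a cand \<Rightarrow> real) \<Rightarrow> 'a set" where
  "nearer_source V x = {u \<in> V. \<bar>x (Vtx u) - x Src\<bar> \<le> \<bar>x Snk - x (Vtx u)\<bar>}"

definition anchor_dist :: "real \<Rightarrow> ('a cand \<Rightarrow> real) \<Rightarrow> 'a \<Rightarrow> real" where
  "anchor_dist p x u = min \<bar>x (Vtx u) - x Src\<bar> \<bar>x Snk - x (Vtx u)\<bar> powr p"

lemma anchor_dist_nonneg: "0 \<le> anchor_dist p x u"
  by (simp add: anchor_dist_def)

lemma abs_powr_diff_le_anchor_dist:
  assumes "0 < p" "p < 1" "u \<in> nearer_source V x \<longleftrightarrow> v \<in> nearer_source V x" "u \<in> V" "v \<in> V"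
  shows "\<bar>x (Vtx u) - x (Vtx v)\<bar> powr p \<le> anchor_dist p x u + anchor_dist p x v"
proof (cases "u \<in> nearer_source V x")
  case True
  then have "anchor_dist p x u = \<bar>x (Vtx u) - x Src\<bar> powr p"
    "anchor_dist p x v = \<bar>x Src - x (Vtx v)\<bar> powr p"
    using assms by (auto simp: anchor_dist_def nearer_source_def min_def abs_minus_commute)
  then show ?thesis
    using abs_add_powr_le[OF assms(1,2), of "x (Vtx u) - x Src" "x Src - x (Vtx v)"] by simp
next
  case False
  then have "anchor_dist p x u = \<bar>x (Vtx u) - x Snk\<bar> powr p"
    "anchor_dist p x v = \<bar>x Snk - x (Vtx v)\<bar> powr p"
    using assms by (auto simp: anchor_dist_def nearer_source_def min_def abs_minus_commute)
  then show ?thesis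
    using abs_add_powr_le[OF assms(1,2), of "x (Vtx u) - x Snk" "x Snk - x (Vtx v)"] by simp
qed

lemma arc_pair_loss_ge:
  assumes "0 < p" "p < 1" "(u, v) \<in> arcs V E"
  shows "edge_cost p V E (nearer_source V x) {u, v} - 2 * (anchor_dist p x u + anchor_dist p x v)
    \<le> jloss p x (Vtx u) (Vtx v) 1 + jloss p x (Vtx v) (Vtx u) 1"
proof (cases "{u, v} \<in> cut_edges V E (nearer_source V x)")
  case True
  have "2 powr p \<le> jloss p x (Vtx u) (Vtx v) 1 + jloss p x (Vtx v) (Vtx u) 1"
    using abs_add_powr_le[OF assms(1,2), of "1 - (x (Vtx u) - x (Vtx v))" "1 - (x (Vtx v) - x (Vtx u))"]
    by (simp add: jloss_def abs_minus_commute)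
  then show ?thesis
    using True anchor_dist_nonneg[of p x u] anchor_dist_nonneg[of p x v]
    by (simp add: edge_cost_def)
next
  case False
  have uv: "u \<in> V" "v \<in> V" "{u, v} \<in> E" using assms(3) by (auto simp: arcs_def)
  then have "u \<in> nearer_source V x \<longleftrightarrow> v \<in> nearer_source V x"
    using False doubleton_in_cut_edges_iff[of "nearer_source V x" V u v E]
    by (auto simp: nearer_source_def)
  from abs_powr_diff_le_anchor_dist[OF assms(1,2) this uv(1,2)]
    one_le_abs_powr_add_abs_powr[OF assms(1,2), of "x (Vtx u) - x (Vtx v)"]
    one_le_abs_powr_add_abs_powr[OF assms(1,2), of "x (Vtx v) - x (Vtx u)"]
  show ?thesis
    using False by (simp add: edge_cost_def jloss_def abs_minus_commute)
qed

lemma arcs_loss_ge: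
  assumes "0 < p" "p < 1" "simple_graph V E"
  shows "(\<Sum>e\<in>E. edge_cost p V E (nearer_source V x) e) - 2 * card V * (\<Sum>u\<in>V. anchor_dist p x u)
    \<le> (\<Sum>(u, v)\<in>arcs V E. jloss p x (Vtx u) (Vtx v) 1)"
proof -
  let ?c = "edge_cost p V E (nearer_source V x)" and ?d = "anchor_dist p x"
  let ?F = "\<lambda>u v. jloss p x (Vtx u) (Vtx v) 1"
  have fin: "finite V" using assms(3) by (simp add: simple_graph_def)
  have "?c {u, v} / 2 - (?d u + ?d v) \<le> (?F u v + ?F v u) / 2" if "(u, v) \<in> arcs V E" for u v
    using arc_pair_loss_ge[OF assms(1,2) that, of x] by (simp add: field_simps)
  then have "(\<Sum>(u, v)\<in>arcs V E. ?c {u, v} / 2 - (?d u + ?d v))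
      \<le> (\<Sum>(u, v)\<in>arcs V E. (?F u v + ?F v u) / 2)"
    by (intro sum_mono) (auto simp: case_prod_unfold)
  also have "\<dots> = (\<Sum>(u, v)\<in>arcs V E. ?F u v)"
    by (rule sum_symmetrize[OF finite_arcs[OF fin] swap_in_arcs, symmetric])
  finally have "(\<Sum>e\<in>E. ?c e) - (\<Sum>(u, v)\<in>arcs V E. ?d u + ?d v) \<le> (\<Sum>(u, v)\<in>arcs V E. ?F u v)"
    using sum_arcs_doubleton[OF assms(3), of ?c]
    by (simp add: case_prod_unfold sum_subtractf sum_divide_distrib[symmetric])
  moreover have "(\<Sum>(u, v)\<in>arcs V E. ?d u + ?d v) \<le> 2 * card V * (\<Sum>u\<in>V. ?d u)"
    using fin by (intro sum_pairs_le_card_mult_sum) (auto simp: arcs_def anchor_dist_nonneg)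
  ultimately show ?thesis by linarith
qed

lemma vertex_loss_ge:
  assumes "0 < p" "p < 1"
  shows "1 - jloss p x Snk Src 1 + (1 - p) * anchor_dist p x u
    \<le> jloss p x Src (Vtx u) 0 + jloss p x Snk (Vtx u) 0"
  using abs_powr_legs_ge[OF assms, of "x Snk" "x Src" "x (Vtx u)"]
  by (simp add: jloss_def anchor_dist_def abs_minus_commute)

lemma qrja_loss_ge_edge_cost:
  assumes "0 < p" "p < 1" "simple_graph V E"
  shows "card V * w2 p (card V) + (\<Sum>e\<in>E. edge_cost p V E (nearer_source V x) e) \<le> qrja_loss p V E x"
proof -
  define n W A D where "n = card V" and "W = w2 p n" and "A = jloss p x Snk Src 1"
    and "D = (\<Sum>u\<in>V. anchor_dist p x u)"
  have "W * (n * (1 - A) + (1 - p) * D) = W * (\<Sum>u\<in>V. 1 - A + (1 - p) * anchor_dist p x u)"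
    by (simp add: n_def D_def sum.distrib sum_distrib_left)
  also have "\<dots> = (\<Sum>u\<in>V. W * (1 - A + (1 - p) * anchor_dist p x u))"
    by (rule sum_distrib_left)
  also have "\<dots> \<le> (\<Sum>u\<in>V. W * (jloss p x Src (Vtx u) 0 + jloss p x Snk (Vtx u) 0))"
    using vertex_loss_ge[OF assms(1,2)] assms
    by (intro sum_mono mult_left_mono) (auto simp: W_def w2_def A_def)
  finally have vertices: "W * (n * (1 - A) + (1 - p) * D)
      \<le> (\<Sum>u\<in>V. W * (jloss p x Src (Vtx u) 0 + jloss p x Snk (Vtx u) 0))" .
  have "W * (1 - p) = 2 * n + (1 - p)"
    using assms by (simp add: W_def w2_def field_simps)
  from arg_cong[OF this, of "\<lambda>z. z * D"]
  have "W * (1 - p) * D = 2 * n * D + (1 - p) * D" by (simp only: distrib_right)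
  moreover have "W * (n * (1 - A) + (1 - p) * D) = n * W - n * W * A + W * (1 - p) * D"
    by (simp add: algebra_simps)
  moreover have "w1 p n * A = n * W * A + A"
    by (simp add: w1_def W_def algebra_simps)
  moreover have "0 \<le> A" "0 \<le> (1 - p) * D"
    using assms by (auto simp: A_def jloss_def D_def anchor_dist_nonneg sum_nonneg)
  moreover note vertices arcs_loss_ge[OF assms, of x]
  ultimately show ?thesis
    unfolding qrja_loss_arcs n_def[symmetric] W_def[symmetric] A_def[symmetric] D_def[symmetric]
    by linarith
qed

theorem mainTheorem7:
  fixes p :: real and V :: "'a set" and E :: "'a set set" and k :: nat
  assumes "0 < p" and "p < 1" and "simple_graph V E"
  shows "(has_cut_at_least V E k \<longleftrightarrow> (\<exists>x. qrja_loss p V E x \<le> loss_bound p V E k))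
       \<and> (\<forall>x. qrja_loss p V E x \<le> loss_bound p V E k \<longrightarrow>
             (\<exists>S. S \<subseteq> V \<and> card (cut_edges V E S) \<ge> k))"
proof -
  have fin: "finite E" using assms(3) by (rule simple_graph_finite_edges)
  have "loss_bound p V E k = card V * w2 p (card V) + (2 * (real (card E) - k) + k * 2 powr p)"
    by (simp add: loss_bound_def)
  then have bound_iff: "card V * w2 p (card V) + (\<Sum>e\<in>E. edge_cost p V E S e) \<le> loss_bound p V E k
      \<longleftrightarrow> k \<le> card (cut_edges V E S)" for S
    using sum_edge_cost_le_iff[OF fin assms(1,2)] by simp
  have rounding: "k \<le> card (cut_edges V E (nearer_source V x))"
    if "qrja_loss p V E x \<le> loss_bound p V E k" for x
    using bound_iff order_trans[OF qrja_loss_ge_edge_cost[OF assms] that] by blast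
  have embedding: "qrja_loss p V E (cut_solution S) \<le> loss_bound p V E k"
    if "S \<subseteq> V" "k \<le> card (cut_edges V E S)" for S
    using that bound_iff[of S] by (simp add: qrja_loss_cut_solution[OF assms(3)])
  have "nearer_source V x \<subseteq> V" for x by (auto simp: nearer_source_def)
  with rounding embedding show ?thesis
    unfolding has_cut_at_least_def by blast
qed

end
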